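(* Let $n\ge2$, $\rho>0$ and $\varpi\in S^{n-1}$. Let ${}^tP(\tau,\xi) = -\tau^2 + \xi\cdot\xi - i\tau\,\xi\cdot\xi$ for $(\tau,\xi)\in\mathbb{C}\times\mathbb{C}^n$, $\widetilde{\zeta^o} = (i\rho^2, i\rho\varpi)$, ${}^tP_o(\zeta) = {}^tP(\zeta+\widetilde{\zeta^o})$ and $\widetilde N = (-1,0,\ldots,0)\in\mathbb{R}\times\mathbb{R}^n$. Let $\sigma(\zeta)$ be a solution of ${}^tP_o(\zeta+\sigma\widetilde N) = 0$, $\zeta = (\tau,\xi)\in\mathbb{C}\times\mathbb{C}^n$. If $\sigma$ is analytic and single-valued in a ball $B\subset\mathbb{C}\times\mathbb{C}^n$ with real center and radius $1$, then $\sup_{\zeta\in B}\operatorname{Im}\sigma(\zeta)\ge0$. *)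

theory Defs
  imports "HOL-Analysis.Analysis"
begin

text \<open>Points of C x C^n are pairs (tau, xi) with xi :: complex^'n.
  The norm on the product type is the Euclidean one.\<close>

definition cscale :: "complex \<Rightarrow> complex \<times> (complex^'n) \<Rightarrow> complex \<times> (complex^'n)" where
  "cscale s z = (s * fst z, \<chi> j. s * (snd z $ j))"

text \<open>Bilinear (not Hermitian) dot product on C^n.\<close>
definition cdot :: "complex^'n \<Rightarrow> complex^'n \<Rightarrow> complex" where
  "cdot xi eta = (\<Sum>j\<in>UNIV. xi $ j * eta $ j)"

definition tP :: "complex \<times> (complex^'n) \<Rightarrow> complex" where
  "tP z = - ((fst z)^2) + cdot (snd z) (snd z) - \<i> * fst z * cdot (snd z) (snd z)"

definition zeta_o :: "real \<Rightarrow> real^'n \<Rightarrow> complex \<times> (complex^'n)" where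
  "zeta_o \<rho> w = (\<i> * complex_of_real (\<rho>^2), \<chi> j. \<i> * complex_of_real \<rho> * complex_of_real (w $ j))"

definition tP_o :: "real \<Rightarrow> real^'n \<Rightarrow> complex \<times> (complex^'n) \<Rightarrow> complex" where
  "tP_o \<rho> w z = tP (z + zeta_o \<rho> w)"

definition Ntilde :: "complex \<times> (complex^'n)" where
  "Ntilde = (-1, 0)"

definition creal :: "real \<times> (real^'n) \<Rightarrow> complex \<times> (complex^'n)" where
  "creal x = (complex_of_real (fst x), \<chi> j. complex_of_real (snd x $ j))"

definition holo_several :: "(complex \<times> (complex^'n) \<Rightarrow> complex) \<Rightarrow> (complex \<times> (complex^'n)) set \<Rightarrow> bool" where
  "holo_several f S \<longleftrightarrow> (\<forall>z\<in>S. \<exists>D. (f has_derivative D) (at z) \<and> (\<forall>v. D (cscale \<i> v) = \<i> * D v))"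

end

theory Submission imports Defs begin

text \<open>Through the real centre \<open>(t, x)\<close> of the ball run the points \<open>(t + \<i>s, x)\<close>, \<open>\<bar>s\<bar> < 1\<close>.
  At such a point \<open>T = t + \<i>s - \<sigma> + \<i>\<rho>\<^sup>2\<close> solves \<open>-T\<^sup>2 + Q - \<i>TQ = 0\<close> with
  \<open>Q = \<xi>\<cdot>\<xi>\<close>, \<open>\<xi> = x + \<i>\<rho>\<varpi>\<close>, and \<open>Re Q = |x|\<^sup>2 - \<rho>\<^sup>2 \<ge> -\<rho>\<^sup>2\<close>. Every root of that
  equation with \<open>Re Q \<ge> -r\<close>, \<open>r \<ge> 0\<close>, has \<open>Im T < 1 + r\<close>, hence \<open>Im \<sigma> > s - 1\<close>, and \<open>s \<rightarrow> 1\<close>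
  gives the claim.\<close>

lemma Im_root_lt:
  fixes T Q :: complex and r :: real
  assumes root: "- (T\<^sup>2) + Q - \<i> * T * Q = 0" and "Re Q \<ge> - r" and "r \<ge> 0"
  shows "Im T < 1 + r"
proof (rule ccontr)
  define u v where "u = Re T" and "v = Im T"
  assume "\<not> Im T < 1 + r"
  then have v: "v \<ge> 1 + r" by (simp add: v_def)
  \<comment> \<open>multiply \<open>Q (1 - \<i>T) = T\<^sup>2\<close> by the conjugate of \<open>1 - \<i>T\<close> and take real parts\<close>
  have "Q * (1 - \<i> * T) = T\<^sup>2" using root by (simp add: algebra_simps)
  then have "Re (Q * (1 - \<i> * T) * cnj (1 - \<i> * T)) = Re (T\<^sup>2 * cnj (1 - \<i> * T))" by simp
  then have key: "Re Q * ((1 + v)\<^sup>2 + u\<^sup>2) = u\<^sup>2 * (1 - v) - v\<^sup>2 * (1 + v)"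
    by (simp add: u_def v_def power2_eq_square algebra_simps)
  have "- r * ((1 + v)\<^sup>2 + u\<^sup>2) \<le> Re Q * ((1 + v)\<^sup>2 + u\<^sup>2)"
    using assms(2) by (intro mult_right_mono) auto
  also have "\<dots> \<le> - r * u\<^sup>2 - v\<^sup>2 * (1 + v)"
  proof -
    have "u\<^sup>2 * (1 + r) \<le> u\<^sup>2 * v" using v by (intro mult_left_mono) simp_all
    then show ?thesis unfolding key by (simp add: algebra_simps)
  qed
  finally have "v\<^sup>2 * (1 + v) \<le> r * (1 + v) * (1 + v)"
    by (simp add: algebra_simps power2_eq_square)
  then have "v\<^sup>2 \<le> r * (1 + v)"
    using v \<open>r \<ge> 0\<close> by (simp add: mult_le_cancel_right)
  moreover have "r * (1 + v) < v * v"
  proof -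
    have "(1 + r) * v \<le> v * v" using v \<open>r \<ge> 0\<close> by (intro mult_right_mono) simp_all
    then show ?thesis using v by (simp add: algebra_simps)
  qed
  ultimately show False by (simp add: power2_eq_square)
qed

lemma Re_cdot_self_ge: "Re (cdot X X) \<ge> - (\<Sum>j\<in>UNIV. (Im (X $ j))\<^sup>2)"
proof -
  have "Re (cdot X X) = (\<Sum>j\<in>UNIV. (Re (X $ j))\<^sup>2) - (\<Sum>j\<in>UNIV. (Im (X $ j))\<^sup>2)"
    by (simp add: cdot_def Re_sum sum_subtractf power2_eq_square)
  then show ?thesis by (simp add: sum_nonneg)
qed

lemma tP_o_shift_Ntilde:
  "tP_o \<rho> w (z + cscale s Ntilde) =
     tP (fst z - s + \<i> * complex_of_real (\<rho>\<^sup>2),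
         \<chi> j. snd z $ j + \<i> * complex_of_real \<rho> * complex_of_real (w $ j))"
  unfolding tP_o_def cscale_def Ntilde_def zeta_o_def
  by (intro arg_cong[where f = tP]) (simp add: prod_eq_iff vec_eq_iff algebra_simps)

lemma Im_gt_of_tP_o_root:
  fixes x w :: "real^'n"
  assumes "norm w = 1"
    and "tP_o \<rho> w ((\<tau>, \<chi> j. complex_of_real (x $ j)) + cscale s Ntilde) = 0"
  shows "Im s > Im \<tau> - 1"
proof -
  define X :: "complex^'n"
    where "X = (\<chi> j. complex_of_real (x $ j) + \<i> * complex_of_real \<rho> * complex_of_real (w $ j))"
  define T where "T = \<tau> - s + \<i> * complex_of_real (\<rho>\<^sup>2)"
  have "(\<Sum>j\<in>UNIV. (Im (X $ j))\<^sup>2) = \<rho>\<^sup>2 * (norm w)\<^sup>2"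
    by (simp add: X_def norm_vec_def L2_set_def sum_nonneg power_mult_distrib sum_distrib_left)
  then have "Re (cdot X X) \<ge> - (\<rho>\<^sup>2)"
    using Re_cdot_self_ge[of X] assms(1) by simp
  moreover have "tP (T, X) = 0"
    using assms(2) tP_o_shift_Ntilde[of \<rho> w "(\<tau>, \<chi> j. complex_of_real (x $ j))" s]
    by (simp add: T_def X_def)
  ultimately have "Im T < 1 + \<rho>\<^sup>2"
    by (intro Im_root_lt) (simp_all add: tP_def)
  then show ?thesis by (simp add: T_def)
qed

lemma dist_creal_imag_shift:
  "dist (creal (t, x)) (complex_of_real t + \<i> * complex_of_real s, \<chi> j. complex_of_real (x $ j))
    = \<bar>s\<bar>"
proof -
  have "creal (t, x) - (complex_of_real t + \<i> * complex_of_real s, \<chi> j. complex_of_real (x $ j))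
      = (- (\<i> * complex_of_real s), 0)"
    by (simp add: creal_def)
  then show ?thesis by (simp add: dist_norm norm_Pair norm_mult)
qed

lemma ereal_SUP_nonneg_approx:
  assumes "\<And>e. e > 0 \<Longrightarrow> \<exists>a\<in>A. f a > - e"
  shows "(SUP a\<in>A. ereal (f a)) \<ge> 0"
proof (rule ereal_le_epsilon2)
  fix e :: real
  assume "e > 0"
  then obtain a where "a \<in> A" "f a > - e" using assms by blast
  then have "ereal (- e) \<le> (SUP a\<in>A. ereal (f a))"
    by (intro SUP_upper2[of a]) auto
  then show "0 \<le> (SUP a\<in>A. ereal (f a)) + ereal e"
    by (cases "SUP a\<in>A. ereal (f a)") auto
qed

theorem lemma2:
  fixes \<rho> :: real and w :: "real^'n" and c :: "real \<times> (real^'n)"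
    and \<sigma> :: "complex \<times> (complex^'n) \<Rightarrow> complex"
  assumes "CARD('n) \<ge> 2"
    and "\<rho> > 0"
    and "norm w = 1"
    and "holo_several \<sigma> (ball (creal c) 1)"
    and "\<forall>z\<in>ball (creal c) 1. tP_o \<rho> w (z + cscale (\<sigma> z) Ntilde) = 0"
  shows "(SUP z\<in>ball (creal c) 1. ereal (Im (\<sigma> z))) \<ge> 0"
proof (rule ereal_SUP_nonneg_approx)
  fix e :: real
  assume "e > 0"
  obtain t x where c: "c = (t, x)" by (cases c)
  define s where "s = max 0 (1 - e)"
  define z where "z = (complex_of_real t + \<i> * complex_of_real s, \<chi> j. complex_of_real (x $ j))"
  have "\<bar>s\<bar> < 1" and "s - 1 \<ge> - e" using \<open>e > 0\<close> by (auto simp: s_def)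
  then have z_in_ball: "z \<in> ball (creal c) 1"
    using dist_creal_imag_shift[of t x s] by (simp add: z_def c)
  then have "tP_o \<rho> w (z + cscale (\<sigma> z) Ntilde) = 0" using assms(5) by blast
  from Im_gt_of_tP_o_root[OF assms(3) this[unfolded z_def]]
  have "Im (\<sigma> z) > s - 1" by (simp add: z_def)
  then show "\<exists>z\<in>ball (creal c) 1. Im (\<sigma> z) > - e"
    using \<open>s - 1 \<ge> - e\<close> z_in_ball by force
qed

end
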